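(* Let $S$ be a numerical semigroup of multiplicity $m$. Then the set of binomials $$\{\,x_ix_j-y^{c_{i,j}}x_{i+j} : 1\le i\le j\le m-1\,\}$$ generates the Apéry toric ideal $J_S$ and is a Gröbner basis of $J_S$ with respect to any term order $\preceq$ on $R$ such that $\mathbf x^{\mathbf a}y^r\succ \mathbf x^{\mathbf b}y^s$ whenever $a_1+\cdots+a_{m-1}>b_1+\cdots+b_{m-1}$ (where $\mathbf x^{\mathbf a},\mathbf x^{\mathbf b}$ are monomials in $x_1,\dots,x_{m-1}$). Moreover, the initial ideal of $J_S$ under such an order is $\langle x_ix_j: 1\le i,j\le m-1\rangle$.
   Context: A numerical semigroup is a submonoid $S\subseteq(\mathbb Z_{\ge0},+)$ containing $0$ with finite complement; its multiplicity is $m=\min(S\setminus\{0\})\ge2$. The Apéry set is $\{n\in S: n-m\notin S\}=\{0,a_1,\dots,a_{m-1}\}$ with $a_i\equiv i\pmod m$; set $a_0=m$. Subscripts are read modulo $m$ with representatives in $\{0,\dots,m-1\}$. Let $R=\Bbbk[x_0,x_1,\dots,x_{m-1}]$ over a field $\Bbbk$, graded by $\deg x_i=a_i$, and write $y=x_0$ (so $x_{i+j}=y$ when $i+j\equiv0$). The Apéry toric ideal is $J_S=\ker(\varphi)$ where $\varphi:R\to\Bbbk[t]$, $x_i\mapsto t^{a_i}$. For $1\le i,j\le m-1$, $c_{i,j}=\frac1m(a_i+a_j-a_{i+j})\ge0$. *)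

theory Defs
  imports "HOL-Library.Poly_Mapping" "HOL-Computational_Algebra.Polynomial"
begin

definition numerical_semigroup :: "nat set \<Rightarrow> bool" where
  "numerical_semigroup S \<longleftrightarrow> 0 \<in> S \<and> (\<forall>a\<in>S. \<forall>b\<in>S. a + b \<in> S) \<and> finite (UNIV - S)"

definition multiplicity :: "nat set \<Rightarrow> nat" where
  "multiplicity S = (LEAST n. n \<in> S \<and> n \<noteq> 0)"

text \<open>Apery set of S with respect to m: elements n of S with n - m not in S
  (n - m taken in the integers, so elements n < m always qualify).\<close>
definition apery_set :: "nat set \<Rightarrow> nat \<Rightarrow> nat set" where
  "apery_set S m = {n \<in> S. \<not> (m \<le> n \<and> n - m \<in> S)}"

definition apery_elt :: "nat set \<Rightarrow> nat \<Rightarrow> nat" where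
  "apery_elt S i = (let m = multiplicity S in
      if i mod m = 0 then m else (THE n. n \<in> apery_set S m \<and> n mod m = i mod m))"

definition cij :: "nat set \<Rightarrow> nat \<Rightarrow> nat \<Rightarrow> nat" where
  "cij S i j = (let m = multiplicity S in
      (apery_elt S i + apery_elt S j - apery_elt S ((i + j) mod m)) div m)"

text \<open>Monomials are exponent vectors nat \<Rightarrow>0 nat (variable x_i has index i),
  polynomials are maps from monomials to coefficients.  The ring
  R = k[x_0,...,x_{m-1}] is the set of polynomials whose monomials only
  involve the variables 0..m-1; y = x_0.\<close>

type_synonym monom = "nat \<Rightarrow>\<^sub>0 nat"
type_synonym 'k mpoly = "monom \<Rightarrow>\<^sub>0 'k"

definition monoms_in :: "nat \<Rightarrow> monom set" where
  "monoms_in m = {\<alpha>. Poly_Mapping.keys \<alpha> \<subseteq> {..<m}}"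

definition poly_ring :: "nat \<Rightarrow> ('k::comm_ring_1) mpoly set" where
  "poly_ring m = {p. Poly_Mapping.keys p \<subseteq> monoms_in m}"

definition var :: "nat \<Rightarrow> ('k::comm_ring_1) mpoly" where
  "var i = Poly_Mapping.single (Poly_Mapping.single i 1) 1"

definition monom_poly :: "monom \<Rightarrow> ('k::comm_ring_1) mpoly" where
  "monom_poly \<alpha> = Poly_Mapping.single \<alpha> 1"

definition ideal_gen :: "nat \<Rightarrow> ('k::comm_ring_1) mpoly set \<Rightarrow> 'k mpoly set" where
  "ideal_gen m G = {p. \<exists>F q. finite F \<and> F \<subseteq> G \<and> (\<forall>g\<in>F. q g \<in> poly_ring m)
                        \<and> p = (\<Sum>g\<in>F. q g * g)}"

text \<open>phi: x_i \<mapsto> t^{a_i}, extended to a k-algebra homomorphism R \<rightarrow> k[t].\<close>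
definition apery_phi :: "nat set \<Rightarrow> ('k::comm_ring_1) mpoly \<Rightarrow> 'k poly" where
  "apery_phi S p = (\<Sum>\<alpha>\<in>Poly_Mapping.keys p. Polynomial.monom (Poly_Mapping.lookup p \<alpha>)
                       (\<Sum>i\<in>Poly_Mapping.keys \<alpha>. Poly_Mapping.lookup \<alpha> i * apery_elt S i))"

definition apery_toric_ideal :: "nat set \<Rightarrow> ('k::comm_ring_1) mpoly set" where
  "apery_toric_ideal S = {p \<in> poly_ring (multiplicity S). apery_phi S p = 0}"

definition apery_binomials :: "nat set \<Rightarrow> ('k::comm_ring_1) mpoly set" where
  "apery_binomials S = (let m = multiplicity S in
     {var i * var j - var 0 ^ cij S i j * var ((i + j) mod m) | i j.
        1 \<le> i \<and> i \<le> j \<and> j \<le> m - 1})"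

definition term_order :: "nat \<Rightarrow> (monom \<Rightarrow> monom \<Rightarrow> bool) \<Rightarrow> bool" where
  "term_order m le \<longleftrightarrow>
     (\<forall>\<alpha>\<in>monoms_in m. le \<alpha> \<alpha>) \<and>
     (\<forall>\<alpha>\<in>monoms_in m. \<forall>\<beta>\<in>monoms_in m. le \<alpha> \<beta> \<and> le \<beta> \<alpha> \<longrightarrow> \<alpha> = \<beta>) \<and>
     (\<forall>\<alpha>\<in>monoms_in m. \<forall>\<beta>\<in>monoms_in m. \<forall>\<gamma>\<in>monoms_in m. le \<alpha> \<beta> \<and> le \<beta> \<gamma> \<longrightarrow> le \<alpha> \<gamma>) \<and>
     (\<forall>\<alpha>\<in>monoms_in m. \<forall>\<beta>\<in>monoms_in m. le \<alpha> \<beta> \<or> le \<beta> \<alpha>) \<and>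
     (\<forall>\<alpha>\<in>monoms_in m. le 0 \<alpha>) \<and>
     (\<forall>\<alpha>\<in>monoms_in m. \<forall>\<beta>\<in>monoms_in m. \<forall>\<gamma>\<in>monoms_in m. le \<alpha> \<beta> \<longrightarrow> le (\<alpha> + \<gamma>) (\<beta> + \<gamma>))"

definition lead_monom :: "(monom \<Rightarrow> monom \<Rightarrow> bool) \<Rightarrow> ('k::comm_ring_1) mpoly \<Rightarrow> monom" where
  "lead_monom le p = (THE \<alpha>. \<alpha> \<in> Poly_Mapping.keys p \<and> (\<forall>\<beta>\<in>Poly_Mapping.keys p. le \<beta> \<alpha>))"

definition initial_ideal :: "nat \<Rightarrow> (monom \<Rightarrow> monom \<Rightarrow> bool) \<Rightarrow> ('k::comm_ring_1) mpoly set \<Rightarrow> 'k mpoly set" where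
  "initial_ideal m le I = ideal_gen m {monom_poly (lead_monom le p) | p. p \<in> I \<and> p \<noteq> 0}"

definition groebner_basis :: "nat \<Rightarrow> (monom \<Rightarrow> monom \<Rightarrow> bool) \<Rightarrow> ('k::comm_ring_1) mpoly set \<Rightarrow> 'k mpoly set \<Rightarrow> bool" where
  "groebner_basis m le G I \<longleftrightarrow> G \<subseteq> I \<and>
     initial_ideal m le I = ideal_gen m {monom_poly (lead_monom le g) | g. g \<in> G \<and> g \<noteq> 0}"

end

theory Submission
  imports Defs
begin

text \<open>The binomial x_i x_j - y^(c_ij) x_(i+j) trades x_i x_j for a monomial of the same
  phi-weight but of degree one less in x_1, ..., x_(m-1). Hence every monomial is congruent modulo
  the binomials to one of x-degree at most one, i.e. to y^r or y^r x_i, of the same weight r m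
  resp. r m + a_i. These weights are pairwise distinct since a_i = i (mod m), so a kernel element
  all of whose terms have x-degree at most one is zero. Reducing the terms of an element of J_S
  therefore shows that the binomials generate J_S. And if the leading monomial of a nonzero element
  of J_S had x-degree at most one, then, the order refining the x-degree, so would all its terms;
  so every leading monomial of J_S is divisible by some x_i x_j, the leading monomial of a binomial.\<close>

section \<open>Polynomials and generated ideals\<close>

lemma poly_mapping_expansion:
  "p = (\<Sum>\<alpha>\<in>Poly_Mapping.keys p. Poly_Mapping.single \<alpha> (Poly_Mapping.lookup p \<alpha>))"
  by (rule poly_mapping_eqI) (simp add: lookup_sum lookup_single when_def in_keys_iff)

lemma monoms_in_zero: "0 \<in> monoms_in m"
  unfolding monoms_in_def by simp

lemma monoms_in_single: "k < m \<Longrightarrow> Poly_Mapping.single k v \<in> monoms_in m"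
  unfolding monoms_in_def by auto

lemma monoms_in_add: "\<alpha> \<in> monoms_in m \<Longrightarrow> \<beta> \<in> monoms_in m \<Longrightarrow> \<alpha> + \<beta> \<in> monoms_in m"
  unfolding monoms_in_def using keys_add[of \<alpha> \<beta>] by blast

lemma poly_ring_keys: "p \<in> poly_ring m \<Longrightarrow> Poly_Mapping.keys p \<subseteq> monoms_in m"
  unfolding poly_ring_def by simp

lemma poly_ring_zero: "0 \<in> poly_ring m"
  unfolding poly_ring_def by simp

lemma poly_ring_single: "\<alpha> \<in> monoms_in m \<Longrightarrow> Poly_Mapping.single \<alpha> c \<in> poly_ring m"
  unfolding poly_ring_def by auto

lemma poly_ring_one: "1 \<in> poly_ring m"
  unfolding one_poly_mapping.abs_eq[symmetric] by (metis monoms_in_zero poly_ring_single single_one)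

lemma poly_ring_add: "p \<in> poly_ring m \<Longrightarrow> q \<in> poly_ring m \<Longrightarrow> p + q \<in> poly_ring m"
  unfolding poly_ring_def using keys_add[of p q] by blast

lemma poly_ring_mult: "p \<in> poly_ring m \<Longrightarrow> q \<in> poly_ring m \<Longrightarrow> p * q \<in> poly_ring m"
  unfolding poly_ring_def using keys_mult[of p q] monoms_in_add[of _ m] by blast

lemma poly_ring_uminus: "p \<in> poly_ring m \<Longrightarrow> - (p :: 'k::comm_ring_1 mpoly) \<in> poly_ring m"
  unfolding poly_ring_def by (auto simp: in_keys_iff)

lemma poly_ring_diff:
  "p \<in> poly_ring m \<Longrightarrow> q \<in> poly_ring m \<Longrightarrow> p - (q :: 'k::comm_ring_1 mpoly) \<in> poly_ring m"
  using poly_ring_add[OF _ poly_ring_uminus] by (metis diff_conv_add_uminus)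

lemma poly_ring_sum: "(\<And>x. x \<in> X \<Longrightarrow> f x \<in> poly_ring m) \<Longrightarrow> (\<Sum>x\<in>X. f x) \<in> poly_ring m"
  by (induction X rule: infinite_finite_induct) (auto intro: poly_ring_add poly_ring_zero)

lemma ideal_gen_zero: "0 \<in> ideal_gen m G"
  unfolding ideal_gen_def by (intro CollectI exI[of _ "{}"]) auto

lemma ideal_gen_generator: "g \<in> G \<Longrightarrow> (g :: 'k::comm_ring_1 mpoly) \<in> ideal_gen m G"
  unfolding ideal_gen_def
  by (intro CollectI exI[of _ "{g}"] exI[of _ "\<lambda>_. 1"]) (auto simp: poly_ring_one)

lemma ideal_gen_add:
  assumes "p \<in> ideal_gen m G" "q \<in> ideal_gen m G"
  shows "p + q \<in> ideal_gen m (G :: 'k::comm_ring_1 mpoly set)"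
proof -
  obtain F1 q1 where 1: "finite F1" "F1 \<subseteq> G" "\<forall>g\<in>F1. q1 g \<in> poly_ring m" "p = (\<Sum>g\<in>F1. q1 g * g)"
    using assms(1) unfolding ideal_gen_def by auto
  obtain F2 q2 where 2: "finite F2" "F2 \<subseteq> G" "\<forall>g\<in>F2. q2 g \<in> poly_ring m" "q = (\<Sum>g\<in>F2. q2 g * g)"
    using assms(2) unfolding ideal_gen_def by auto
  define r where "r g = (if g \<in> F1 then q1 g else 0) + (if g \<in> F2 then q2 g else 0)" for g
  have "(\<Sum>g\<in>F1 \<union> F2. r g * g) = (\<Sum>g\<in>F1 \<union> F2. (if g \<in> F1 then q1 g else 0) * g)
      + (\<Sum>g\<in>F1 \<union> F2. (if g \<in> F2 then q2 g else 0) * g)"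
    unfolding r_def by (simp add: distrib_right sum.distrib)
  also have "(\<Sum>g\<in>F1 \<union> F2. (if g \<in> F1 then q1 g else 0) * g) = (\<Sum>g\<in>F1. q1 g * g)"
    using 1 2 by (intro sum.mono_neutral_cong_right) auto
  also have "(\<Sum>g\<in>F1 \<union> F2. (if g \<in> F2 then q2 g else 0) * g) = (\<Sum>g\<in>F2. q2 g * g)"
    using 1 2 by (intro sum.mono_neutral_cong_right) auto
  finally have "p + q = (\<Sum>g\<in>F1 \<union> F2. r g * g)" using 1 2 by simp
  moreover have "\<forall>g\<in>F1 \<union> F2. r g \<in> poly_ring m"
    using 1 2 unfolding r_def by (auto intro!: poly_ring_add simp: poly_ring_zero)
  ultimately show ?thesis
    unfolding ideal_gen_def using 1 2 by (intro CollectI exI[of _ "F1 \<union> F2"] exI[of _ r]) auto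
qed

lemma ideal_gen_mult:
  assumes "r \<in> poly_ring m" "p \<in> ideal_gen m G"
  shows "r * p \<in> ideal_gen m (G :: 'k::comm_ring_1 mpoly set)"
proof -
  obtain F q where F: "finite F" "F \<subseteq> G" "\<forall>g\<in>F. q g \<in> poly_ring m" "p = (\<Sum>g\<in>F. q g * g)"
    using assms(2) unfolding ideal_gen_def by auto
  then have "r * p = (\<Sum>g\<in>F. (r * q g) * g)"
    by (simp add: sum_distrib_left mult.assoc)
  then show ?thesis
    unfolding ideal_gen_def using F assms(1)
    by (intro CollectI exI[of _ F] exI[of _ "\<lambda>g. r * q g"]) (auto intro: poly_ring_mult)
qed

lemma ideal_gen_sum:
  "(\<And>x. x \<in> X \<Longrightarrow> f x \<in> ideal_gen m G) \<Longrightarrow> (\<Sum>x\<in>X. f x) \<in> ideal_gen m (G :: 'k::comm_ring_1 mpoly set)"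
  by (induction X rule: infinite_finite_induct) (auto intro: ideal_gen_add ideal_gen_zero)

lemma ideal_gen_minimal:
  assumes "G \<subseteq> ideal_gen m H"
  shows "ideal_gen m G \<subseteq> ideal_gen m (H :: 'k::comm_ring_1 mpoly set)"
proof
  fix p assume "p \<in> ideal_gen m G"
  then obtain F q where "finite F" "F \<subseteq> G" "\<forall>g\<in>F. q g \<in> poly_ring m" "p = (\<Sum>g\<in>F. q g * g)"
    unfolding ideal_gen_def by auto
  with assms show "p \<in> ideal_gen m H"
    by (auto intro!: ideal_gen_sum ideal_gen_mult)
qed

lemma ideal_gen_mono: "G \<subseteq> H \<Longrightarrow> ideal_gen m G \<subseteq> ideal_gen m (H :: 'k::comm_ring_1 mpoly set)"
  by (meson ideal_gen_generator ideal_gen_minimal subset_iff)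

lemma monom_poly_add: "monom_poly (\<alpha> + \<beta>) = (monom_poly \<alpha> * monom_poly \<beta> :: 'k::comm_ring_1 mpoly)"
  unfolding monom_poly_def by (simp add: mult_single)

lemma var_power: "var i ^ c = (monom_poly (Poly_Mapping.single i c) :: 'k::comm_ring_1 mpoly)"
proof (induction c)
  case 0
  then show ?case unfolding monom_poly_def by simp
next
  case (Suc c)
  then show ?case
    unfolding var_def monom_poly_def by (simp add: mult_single single_add[symmetric] add.commute)
qed

lemma var_mult_var:
  "var i * var j = (monom_poly (Poly_Mapping.single i 1 + Poly_Mapping.single j 1) :: 'k::comm_ring_1 mpoly)"
  unfolding var_def monom_poly_def by (simp add: mult_single)

section \<open>Term orders and leading monomials\<close>

lemma term_order_refl: "term_order m le \<Longrightarrow> \<alpha> \<in> monoms_in m \<Longrightarrow> le \<alpha> \<alpha>"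
  unfolding term_order_def by blast

lemma term_order_antisym:
  "term_order m le \<Longrightarrow> \<alpha> \<in> monoms_in m \<Longrightarrow> \<beta> \<in> monoms_in m \<Longrightarrow> le \<alpha> \<beta> \<Longrightarrow> le \<beta> \<alpha> \<Longrightarrow> \<alpha> = \<beta>"
  unfolding term_order_def by blast

lemma term_order_trans:
  "term_order m le \<Longrightarrow> \<alpha> \<in> monoms_in m \<Longrightarrow> \<beta> \<in> monoms_in m \<Longrightarrow> \<gamma> \<in> monoms_in m \<Longrightarrow>
    le \<alpha> \<beta> \<Longrightarrow> le \<beta> \<gamma> \<Longrightarrow> le \<alpha> \<gamma>"
  unfolding term_order_def by blast

lemma term_order_total:
  "term_order m le \<Longrightarrow> \<alpha> \<in> monoms_in m \<Longrightarrow> \<beta> \<in> monoms_in m \<Longrightarrow> le \<alpha> \<beta> \<or> le \<beta> \<alpha>"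
  unfolding term_order_def by blast

lemma term_order_ex_greatest:
  assumes "term_order m le" "finite K" "K \<noteq> {}" "K \<subseteq> monoms_in m"
  shows "\<exists>\<alpha>\<in>K. \<forall>\<beta>\<in>K. le \<beta> \<alpha>"
  using assms(2-4)
proof (induction K rule: finite_ne_induct)
  case (singleton x)
  then show ?case using term_order_refl[OF assms(1)] by auto
next
  case (insert x F)
  then obtain \<alpha> where \<alpha>: "\<alpha> \<in> F" "\<forall>\<beta>\<in>F. le \<beta> \<alpha>" by auto
  have x: "x \<in> monoms_in m" and F: "F \<subseteq> monoms_in m" using insert.prems by auto
  show ?case
  proof (cases "le \<alpha> x")
    case True
    then have "\<forall>\<beta>\<in>insert x F. le \<beta> x"
      using \<alpha> x F term_order_refl[OF assms(1)] term_order_trans[OF assms(1), of _ \<alpha> x] by blast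
    then show ?thesis by blast
  next
    case False
    then show ?thesis using \<alpha> x F term_order_total[OF assms(1), of x \<alpha>] by blast
  qed
qed

lemma lead_monom_eqI:
  assumes "term_order m le" "p \<in> poly_ring m"
    and "\<alpha> \<in> Poly_Mapping.keys p" "\<forall>\<beta>\<in>Poly_Mapping.keys p. le \<beta> \<alpha>"
  shows "lead_monom le p = \<alpha>"
  unfolding lead_monom_def
proof (rule the_equality)
  fix \<alpha>' assume "\<alpha>' \<in> Poly_Mapping.keys p \<and> (\<forall>\<beta>\<in>Poly_Mapping.keys p. le \<beta> \<alpha>')"
  then show "\<alpha>' = \<alpha>"
    using assms term_order_antisym poly_ring_keys by (metis subsetD)
qed (use assms in blast)

lemma lead_monom_greatest:
  assumes "term_order m le" "p \<in> poly_ring m" "p \<noteq> 0"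
  shows "lead_monom le p \<in> Poly_Mapping.keys p" "\<forall>\<beta>\<in>Poly_Mapping.keys p. le \<beta> (lead_monom le p)"
proof -
  obtain \<alpha> where "\<alpha> \<in> Poly_Mapping.keys p" "\<forall>\<beta>\<in>Poly_Mapping.keys p. le \<beta> \<alpha>"
    using term_order_ex_greatest[OF assms(1) finite_keys _ poly_ring_keys[OF assms(2)]] assms(3)
    by auto
  with lead_monom_eqI[OF assms(1,2)]
  show "lead_monom le p \<in> Poly_Mapping.keys p" "\<forall>\<beta>\<in>Poly_Mapping.keys p. le \<beta> (lead_monom le p)"
    by simp_all
qed

section \<open>Weighted degree and x-degree\<close>

definition wdeg :: "nat set \<Rightarrow> monom \<Rightarrow> nat" where
  "wdeg S \<alpha> = (\<Sum>i\<in>Poly_Mapping.keys \<alpha>. Poly_Mapping.lookup \<alpha> i * apery_elt S i)"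

definition xdeg :: "nat \<Rightarrow> monom \<Rightarrow> nat" where
  "xdeg m \<alpha> = (\<Sum>i\<in>{1..m-1}. Poly_Mapping.lookup \<alpha> i)"

lemma wdeg_add: "wdeg S (\<alpha> + \<beta>) = wdeg S \<alpha> + wdeg S \<beta>"
  unfolding wdeg_def by (rule setsum_keys_plus_distrib) (simp_all add: algebra_simps)

lemma wdeg_single: "wdeg S (Poly_Mapping.single k v) = v * apery_elt S k"
  unfolding wdeg_def by simp

lemma xdeg_add: "xdeg m (\<alpha> + \<beta>) = xdeg m \<alpha> + xdeg m \<beta>"
  unfolding xdeg_def by (simp add: lookup_add sum.distrib)

lemma xdeg_single: "xdeg m (Poly_Mapping.single k v) = (if k \<in> {1..m-1} then v else 0)"
  unfolding xdeg_def by (simp add: lookup_single when_def)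

lemma apery_phi_wdeg:
  "apery_phi S p = (\<Sum>\<alpha>\<in>Poly_Mapping.keys p. Polynomial.monom (Poly_Mapping.lookup p \<alpha>) (wdeg S \<alpha>))"
  unfolding apery_phi_def wdeg_def ..

lemma apery_phi_single: "apery_phi S (Poly_Mapping.single \<alpha> c) = Polynomial.monom c (wdeg S \<alpha>)"
  unfolding apery_phi_wdeg by simp

lemma apery_phi_add: "apery_phi S (p + q) = apery_phi S p + apery_phi S q"
  unfolding apery_phi_wdeg by (rule setsum_keys_plus_distrib) (simp_all add: add_monom)

lemma apery_phi_diff: "apery_phi S (p - q) = apery_phi S p - apery_phi S (q :: 'k::comm_ring_1 mpoly)"
  using apery_phi_add[of S "p - q" q] by (simp add: eq_diff_eq)

lemma apery_phi_zero: "apery_phi S 0 = 0"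
  unfolding apery_phi_def by simp

lemma apery_phi_sum: "apery_phi S (\<Sum>x\<in>X. f x) = (\<Sum>x\<in>X. apery_phi S (f x))"
  by (induction X rule: infinite_finite_induct) (simp_all add: apery_phi_add apery_phi_zero)

lemma apery_phi_mult: "apery_phi S (p * q) = apery_phi S p * apery_phi S (q :: 'k::comm_ring_1 mpoly)"
proof -
  let ?c = "Poly_Mapping.lookup p" and ?d = "Poly_Mapping.lookup q"
  have "p * q = (\<Sum>\<alpha>\<in>Poly_Mapping.keys p. Poly_Mapping.single \<alpha> (?c \<alpha>))
              * (\<Sum>\<beta>\<in>Poly_Mapping.keys q. Poly_Mapping.single \<beta> (?d \<beta>))"
    by (subst (1) poly_mapping_expansion[of p], subst (1) poly_mapping_expansion[of q]) (rule refl)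
  also have "\<dots> = (\<Sum>\<alpha>\<in>Poly_Mapping.keys p. \<Sum>\<beta>\<in>Poly_Mapping.keys q.
                    Poly_Mapping.single (\<alpha> + \<beta>) (?c \<alpha> * ?d \<beta>))"
    by (simp add: sum_product mult_single)
  finally have "apery_phi S (p * q) = (\<Sum>\<alpha>\<in>Poly_Mapping.keys p. \<Sum>\<beta>\<in>Poly_Mapping.keys q.
        Polynomial.monom (?c \<alpha>) (wdeg S \<alpha>) * Polynomial.monom (?d \<beta>) (wdeg S \<beta>))"
    by (simp add: apery_phi_sum apery_phi_single wdeg_add mult_monom)
  also have "\<dots> = apery_phi S p * apery_phi S q"
    unfolding apery_phi_wdeg by (simp add: sum_product)
  finally show ?thesis .
qed

lemma xdeg_pos_split:
  assumes "\<alpha> \<in> monoms_in m" "xdeg m \<alpha> \<ge> 1"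
  obtains i \<gamma> where "i \<in> {1..m-1}" "\<gamma> \<in> monoms_in m" "\<alpha> = \<gamma> + Poly_Mapping.single i 1"
    "xdeg m \<gamma> + 1 = xdeg m \<alpha>"
proof -
  obtain i where i: "i \<in> {1..m-1}" "Poly_Mapping.lookup \<alpha> i \<noteq> 0"
    using assms(2) unfolding xdeg_def by (metis (no_types, lifting) sum.neutral not_one_le_zero)
  define \<gamma> where "\<gamma> = \<alpha> - Poly_Mapping.single i 1"
  have \<alpha>: "\<alpha> = \<gamma> + Poly_Mapping.single i 1"
    by (rule poly_mapping_eqI) (use i in \<open>auto simp: \<gamma>_def lookup_add lookup_minus lookup_single when_def\<close>)
  have "Poly_Mapping.keys \<gamma> \<subseteq> Poly_Mapping.keys \<alpha>"
    by (auto simp: \<gamma>_def in_keys_iff lookup_minus)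
  then have "\<gamma> \<in> monoms_in m"
    using assms(1) unfolding monoms_in_def by auto
  moreover have "xdeg m \<gamma> + 1 = xdeg m \<alpha>"
    using \<alpha> i by (metis xdeg_add xdeg_single)
  ultimately show ?thesis using that i \<alpha> by blast
qed

lemma xdeg_ge_2_split:
  assumes "\<alpha> \<in> monoms_in m" "xdeg m \<alpha> \<ge> 2"
  obtains i j \<gamma> where "1 \<le> i" "i \<le> j" "j \<le> m - 1" "\<gamma> \<in> monoms_in m"
    "\<alpha> = \<gamma> + (Poly_Mapping.single i 1 + Poly_Mapping.single j 1)" "xdeg m \<gamma> + 2 = xdeg m \<alpha>"
proof -
  have "xdeg m \<alpha> \<ge> 1" using assms(2) by simp
  then obtain i \<gamma>' where i: "i \<in> {1..m-1}" "\<gamma>' \<in> monoms_in m" "\<alpha> = \<gamma>' + Poly_Mapping.single i 1"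
      "xdeg m \<gamma>' + 1 = xdeg m \<alpha>"
    by (rule xdeg_pos_split[OF assms(1)])
  have "xdeg m \<gamma>' \<ge> 1" using i(4) assms(2) by simp
  then obtain j \<gamma> where j: "j \<in> {1..m-1}" "\<gamma> \<in> monoms_in m" "\<gamma>' = \<gamma> + Poly_Mapping.single j 1"
      "xdeg m \<gamma> + 1 = xdeg m \<gamma>'"
    by (rule xdeg_pos_split[OF i(2)])
  have "\<alpha> = \<gamma> + (Poly_Mapping.single (min i j) 1 + Poly_Mapping.single (max i j) 1)"
    using i(3) j(3) by (cases "i \<le> j") (simp_all add: ac_simps)
  then show ?thesis
    by (rule that[rotated -2]) (use i j in auto)
qed

lemma xdeg_eq_0_imp_power_of_y:
  assumes "\<alpha> \<in> monoms_in m" "xdeg m \<alpha> = 0"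
  shows "\<alpha> = Poly_Mapping.single 0 (Poly_Mapping.lookup \<alpha> 0)"
proof (rule poly_mapping_eqI)
  fix k
  have "k \<in> {1..m-1} \<Longrightarrow> Poly_Mapping.lookup \<alpha> k = 0"
    using assms(2) unfolding xdeg_def by simp
  moreover have "k \<ge> m \<Longrightarrow> Poly_Mapping.lookup \<alpha> k = 0"
    using assms(1) unfolding monoms_in_def by (auto simp: in_keys_iff)
  ultimately show "Poly_Mapping.lookup \<alpha> k = Poly_Mapping.lookup (Poly_Mapping.single 0 (Poly_Mapping.lookup \<alpha> 0)) k"
    by (cases "k = 0"; cases "k < m") (auto simp: lookup_single)
qed

lemma xdeg_le_1_cases:
  assumes "\<alpha> \<in> monoms_in m" "xdeg m \<alpha> \<le> 1"
  obtains r where "\<alpha> = Poly_Mapping.single 0 r"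
    | r i where "i \<in> {1..m-1}" "\<alpha> = Poly_Mapping.single 0 r + Poly_Mapping.single i 1"
proof (cases "xdeg m \<alpha> = 0")
  case True
  then show ?thesis using that(1) xdeg_eq_0_imp_power_of_y[OF assms(1)] by blast
next
  case False
  then have "xdeg m \<alpha> \<ge> 1" by simp
  then obtain i \<gamma> where i: "i \<in> {1..m-1}" "\<gamma> \<in> monoms_in m" "\<alpha> = \<gamma> + Poly_Mapping.single i 1"
      "xdeg m \<gamma> + 1 = xdeg m \<alpha>"
    by (rule xdeg_pos_split[OF assms(1)])
  have "\<gamma> = Poly_Mapping.single 0 (Poly_Mapping.lookup \<gamma> 0)"
    using i(2,4) assms(2) by (intro xdeg_eq_0_imp_power_of_y[of _ m]) simp_all
  then show ?thesis
    using that(2) i(1,3) by metis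
qed

section \<open>Apery elements\<close>

locale num_semigroup =
  fixes S :: "nat set"
  assumes numerical_semigroup: "numerical_semigroup S"
begin

abbreviation "m \<equiv> multiplicity S"
abbreviation "a \<equiv> apery_elt S"

lemma add_closed: "x \<in> S \<Longrightarrow> y \<in> S \<Longrightarrow> x + y \<in> S"
  using numerical_semigroup unfolding numerical_semigroup_def by blast

lemma ex_all_ge_in: "\<exists>N. \<forall>n\<ge>N. n \<in> S"
proof -
  have "finite (UNIV - S)"
    using numerical_semigroup unfolding numerical_semigroup_def by blast
  then obtain N where "\<forall>x\<in>UNIV - S. x < N"
    by (auto simp: finite_nat_set_iff_bounded)
  then show ?thesis by (auto simp: not_less[symmetric])
qed

lemma multiplicity_in: "m \<in> S" and multiplicity_pos: "m \<noteq> 0"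
proof -
  obtain N where "\<forall>n\<ge>N. n \<in> S" using ex_all_ge_in by blast
  then have "\<exists>n. n \<in> S \<and> n \<noteq> 0" by (intro exI[of _ "N + 1"]) simp
  from LeastI_ex[OF this] show "m \<in> S" "m \<noteq> 0"
    unfolding multiplicity_def by simp_all
qed

lemma multiplicity_le: "n \<in> S \<Longrightarrow> n \<noteq> 0 \<Longrightarrow> m \<le> n"
  unfolding multiplicity_def by (rule Least_le) simp

lemma add_mult_multiplicity_in: "n \<in> S \<Longrightarrow> n + k * m \<in> S"
proof (induction k)
  case (Suc k)
  then show ?case using add_closed[OF Suc.IH multiplicity_in] by (simp add: ac_simps)
qed simp

lemma apery_elt_least:
  assumes "i mod m \<noteq> 0"
  shows "a i \<in> S" "a i mod m = i mod m" "\<And>n. n \<in> S \<Longrightarrow> n mod m = i mod m \<Longrightarrow> a i \<le> n"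
proof -
  have "\<exists>n. n \<in> S \<and> n mod m = i mod m"
  proof -
    obtain N where N: "\<forall>n\<ge>N. n \<in> S" using ex_all_ge_in by blast
    have "N * m + i mod m \<ge> N" using multiplicity_pos by (simp add: trans_le_add1)
    with N show ?thesis by (intro exI[of _ "N * m + i mod m"]) simp
  qed
  define n0 where "n0 = (LEAST n. n \<in> S \<and> n mod m = i mod m)"
  have n0: "n0 \<in> S" "n0 mod m = i mod m"
    using LeastI_ex[OF \<open>\<exists>n. _\<close>] unfolding n0_def by auto
  have n0_le: "\<And>n. n \<in> S \<Longrightarrow> n mod m = i mod m \<Longrightarrow> n0 \<le> n"
    unfolding n0_def by (rule Least_le) simp
  have n0_apery: "n0 \<in> apery_set S m"
  proof -
    have "(n0 - m) mod m = i mod m" if "m \<le> n0"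
      using n0(2) that le_mod_geq[of m n0] by simp
    then have "\<not> (m \<le> n0 \<and> n0 - m \<in> S)"
      using n0_le multiplicity_pos by fastforce
    then show ?thesis using n0 unfolding apery_set_def by auto
  qed
  have unique: "x = n0" if x: "x \<in> apery_set S m" "x mod m = i mod m" for x
  proof (rule ccontr)
    assume "x \<noteq> n0"
    moreover have "x \<in> S" using x(1) unfolding apery_set_def by simp
    ultimately have lt: "n0 < x" using n0_le x(2) by fastforce
    then obtain k where "x - n0 = m * k"
      using x(2) n0(2) mod_eq_dvd_iff_nat[of n0 x m] by (auto elim: dvdE)
    with lt have "x = n0 + m + (k - 1) * m"
      by (cases k) (simp_all add: algebra_simps)
    then have "m \<le> x" "x - m \<in> S" using add_mult_multiplicity_in[OF n0(1)] by simp_all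
    then show False using x(1) unfolding apery_set_def by auto
  qed
  have "a i = (THE n. n \<in> apery_set S m \<and> n mod m = i mod m)"
    using assms unfolding apery_elt_def Let_def by simp
  also have "\<dots> = n0"
    using n0_apery n0(2) unique by blast
  finally show "a i \<in> S" "a i mod m = i mod m" "\<And>n. n \<in> S \<Longrightarrow> n mod m = i mod m \<Longrightarrow> a i \<le> n"
    using n0 n0_le by auto
qed

lemma apery_elt_0: "i mod m = 0 \<Longrightarrow> a i = m"
  unfolding apery_elt_def by simp

lemma apery_elt_in: "a i \<in> S"
  using apery_elt_least(1) apery_elt_0 multiplicity_in by (cases "i mod m = 0") auto

lemma apery_elt_mod: "a i mod m = i mod m"
  using apery_elt_least(2) apery_elt_0 by (cases "i mod m = 0") auto

lemma apery_elt_pos: "a i \<noteq> 0"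
  by (metis apery_elt_0 apery_elt_mod mod_0 multiplicity_pos)

lemma cij_mult_add:
  assumes "1 \<le> i" "i \<le> m - 1" "1 \<le> j" "j \<le> m - 1"
  shows "cij S i j * m + a ((i + j) mod m) = a i + a j"
proof -
  define k where "k = (i + j) mod m"
  have residue: "(a i + a j) mod m = a k mod m"
    unfolding k_def by (metis apery_elt_mod mod_add_eq mod_mod_trivial)
  have in_S: "a i + a j \<in> S"
    using add_closed[OF apery_elt_in apery_elt_in] .
  have "a k \<le> a i + a j"
  proof (cases "k mod m = 0")
    case True
    then show ?thesis
      using apery_elt_0 multiplicity_le[OF in_S] apery_elt_pos[of i] by auto
  next
    case False
    then show ?thesis
      using apery_elt_least(3)[OF False in_S] residue apery_elt_mod[of k] by simp
  qed
  moreover from this have "m dvd a i + a j - a k"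
    using residue mod_eq_dvd_iff_nat by simp
  ultimately show ?thesis
    unfolding cij_def Let_def k_def[symmetric] by simp
qed

section \<open>The Apery binomials generate the toric ideal\<close>

definition prod_monom :: "nat \<Rightarrow> nat \<Rightarrow> monom" where
  "prod_monom i j = Poly_Mapping.single i 1 + Poly_Mapping.single j 1"

definition reduct_monom :: "nat \<Rightarrow> nat \<Rightarrow> monom" where
  "reduct_monom i j = Poly_Mapping.single 0 (cij S i j) + Poly_Mapping.single ((i + j) mod m) 1"

lemma apery_binomials_eq:
  "(apery_binomials S :: 'k::comm_ring_1 mpoly set) =
     {monom_poly (prod_monom i j) - monom_poly (reduct_monom i j) | i j. 1 \<le> i \<and> i \<le> j \<and> j \<le> m - 1}"
proof -
  have var: "var k = (monom_poly (Poly_Mapping.single k 1) :: 'k mpoly)" for k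
    by (simp add: var_def monom_poly_def)
  have "var i * var j - var 0 ^ cij S i j * var ((i + j) mod m) =
      (monom_poly (prod_monom i j) - monom_poly (reduct_monom i j) :: 'k mpoly)" for i j
    unfolding prod_monom_def reduct_monom_def
    by (simp only: var_mult_var var_power, simp only: var monom_poly_add)
  then show ?thesis
    unfolding apery_binomials_def Let_def by simp
qed

lemma prod_monom_commute: "prod_monom i j = prod_monom j i"
  unfolding prod_monom_def by (simp add: add.commute)

context
  fixes i j assumes ij: "1 \<le> i" "i \<le> m - 1" "1 \<le> j" "j \<le> m - 1"
begin

lemma prod_monom_in: "prod_monom i j \<in> monoms_in m"
  unfolding prod_monom_def using ij multiplicity_pos by (intro monoms_in_add monoms_in_single) auto

lemma reduct_monom_in: "reduct_monom i j \<in> monoms_in m"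
  unfolding reduct_monom_def using multiplicity_pos by (intro monoms_in_add monoms_in_single) auto

lemma xdeg_prod_monom: "xdeg m (prod_monom i j) = 2"
  unfolding prod_monom_def using ij by (simp add: xdeg_add xdeg_single)

lemma xdeg_reduct_monom: "xdeg m (reduct_monom i j) \<le> 1"
  unfolding reduct_monom_def by (simp add: xdeg_add xdeg_single)

lemma wdeg_reduct_monom: "wdeg S (reduct_monom i j) = wdeg S (prod_monom i j)"
  unfolding prod_monom_def reduct_monom_def
  using cij_mult_add[OF ij] apery_elt_0[of 0] by (simp add: wdeg_add wdeg_single)

lemma apery_binomial_in_toric_ideal:
  "(monom_poly (prod_monom i j) - monom_poly (reduct_monom i j) :: 'k::comm_ring_1 mpoly)
     \<in> apery_toric_ideal S"
  unfolding apery_toric_ideal_def monom_poly_def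
  using prod_monom_in reduct_monom_in wdeg_reduct_monom
  by (auto intro!: poly_ring_diff poly_ring_single simp: apery_phi_diff apery_phi_single)

end

lemma apery_binomials_subset_toric_ideal:
  "(apery_binomials S :: 'k::comm_ring_1 mpoly set) \<subseteq> apery_toric_ideal S"
  unfolding apery_binomials_eq by (auto intro!: apery_binomial_in_toric_ideal)

lemma ideal_gen_apery_binomials_subset:
  "ideal_gen m (apery_binomials S) \<subseteq> (apery_toric_ideal S :: 'k::comm_ring_1 mpoly set)"
proof
  fix p :: "'k mpoly" assume "p \<in> ideal_gen m (apery_binomials S)"
  then obtain F q where F: "finite F" "F \<subseteq> apery_toric_ideal S" "\<forall>g\<in>F. q g \<in> poly_ring m"
      "p = (\<Sum>g\<in>F. q g * g)"
    unfolding ideal_gen_def using apery_binomials_subset_toric_ideal by blast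
  then have "p \<in> poly_ring m"
    unfolding apery_toric_ideal_def by (auto intro!: poly_ring_sum poly_ring_mult)
  moreover have "apery_phi S p = 0"
    using F(2) unfolding F(4) apery_phi_sum apery_phi_mult apery_toric_ideal_def
    by (auto intro!: sum.neutral)
  ultimately show "p \<in> apery_toric_ideal S"
    unfolding apery_toric_ideal_def by simp
qed

lemma wdeg_inj_on_xdeg_le_1:
  assumes "\<alpha> \<in> monoms_in m" "xdeg m \<alpha> \<le> 1" "\<beta> \<in> monoms_in m" "xdeg m \<beta> \<le> 1"
    and "wdeg S \<alpha> = wdeg S \<beta>"
  shows "\<alpha> = \<beta>"
proof -
  have y: "wdeg S (Poly_Mapping.single 0 r) = r * m" for r
    by (simp add: wdeg_single apery_elt_0)
  have yx: "wdeg S (Poly_Mapping.single 0 r + Poly_Mapping.single i 1) = r * m + a i" for r i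
    by (simp add: wdeg_add wdeg_single apery_elt_0)
  have residue: "a i mod m = i" if "i \<in> {1..m-1}" for i
    using that apery_elt_mod[of i] multiplicity_pos by auto
  from assms(1,2) show ?thesis
  proof (cases rule: xdeg_le_1_cases)
    case \<alpha>: (1 r)
    from assms(3,4) show ?thesis
    proof (cases rule: xdeg_le_1_cases)
      case (1 r')
      then show ?thesis using \<alpha> assms(5) multiplicity_pos by (simp add: y)
    next
      case (2 r' j)
      have "r * m = r' * m + a j" using assms(5) unfolding \<alpha> 2(2) y yx .
      then have "(r * m) mod m = (r' * m + a j) mod m" by (rule arg_cong)
      then have "0 = j" using residue[OF 2(1)] by simp
      then show ?thesis using 2(1) by simp
    qed
  next
    case \<alpha>: (2 r i)
    from assms(3,4) show ?thesis
    proof (cases rule: xdeg_le_1_cases)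
      case (1 r')
      have "r' * m = r * m + a i" using assms(5) unfolding \<alpha>(2) 1 y yx ..
      then have "(r' * m) mod m = (r * m + a i) mod m" by (rule arg_cong)
      then have "0 = i" using residue[OF \<alpha>(1)] by simp
      then show ?thesis using \<alpha>(1) by simp
    next
      case (2 r' j)
      have eq: "r * m + a i = r' * m + a j" using assms(5) unfolding \<alpha>(2) 2(2) yx .
      then have "(r * m + a i) mod m = (r' * m + a j) mod m" by (rule arg_cong)
      then have "i = j" using residue[OF \<alpha>(1)] residue[OF 2(1)] by simp
      then show ?thesis using eq \<alpha> 2 multiplicity_pos by simp
    qed
  qed
qed

lemma kernel_eq_0_if_xdeg_le_1:
  fixes p :: "'k::comm_ring_1 mpoly"
  assumes "p \<in> poly_ring m" "\<forall>\<alpha>\<in>Poly_Mapping.keys p. xdeg m \<alpha> \<le> 1" "apery_phi S p = 0"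
  shows "p = 0"
proof (rule ccontr)
  assume "p \<noteq> 0"
  then obtain \<alpha> where \<alpha>: "\<alpha> \<in> Poly_Mapping.keys p" by (metis keys_eq_empty ex_in_conv)
  have "coeff (apery_phi S p) (wdeg S \<alpha>) =
      (\<Sum>\<beta>\<in>Poly_Mapping.keys p. if \<beta> = \<alpha> then Poly_Mapping.lookup p \<beta> else 0)"
    unfolding apery_phi_wdeg coeff_sum coeff_monom
  proof (rule sum.cong[OF refl])
    fix \<beta> assume "\<beta> \<in> Poly_Mapping.keys p"
    then have "wdeg S \<beta> = wdeg S \<alpha> \<longleftrightarrow> \<beta> = \<alpha>"
      using wdeg_inj_on_xdeg_le_1 \<alpha> poly_ring_keys[OF assms(1)] assms(2) by blast
    then show "(if wdeg S \<beta> = wdeg S \<alpha> then Poly_Mapping.lookup p \<beta> else 0) =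
        (if \<beta> = \<alpha> then Poly_Mapping.lookup p \<beta> else 0)" by simp
  qed
  also have "\<dots> = Poly_Mapping.lookup p \<alpha>"
    using \<alpha> by simp
  finally show False
    using \<alpha> assms(3) by (simp add: in_keys_iff)
qed

lemma monom_reduces:
  assumes "\<alpha> \<in> monoms_in m"
  shows "\<exists>\<beta>\<in>monoms_in m. xdeg m \<beta> \<le> 1 \<and> wdeg S \<beta> = wdeg S \<alpha>
           \<and> monom_poly \<alpha> - monom_poly \<beta> \<in> ideal_gen m (apery_binomials S :: 'k::comm_ring_1 mpoly set)"
  using assms
proof (induction "xdeg m \<alpha>" arbitrary: \<alpha> rule: less_induct)
  case less
  show ?case
  proof (cases "xdeg m \<alpha> \<le> 1")
    case True
    then show ?thesis using less.prems by (intro bexI[of _ \<alpha>]) (auto simp: ideal_gen_zero)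
  next
    case False
    then have "xdeg m \<alpha> \<ge> 2" by simp
    then obtain i j \<gamma> where ij: "1 \<le> i" "i \<le> j" "j \<le> m - 1" and \<gamma>: "\<gamma> \<in> monoms_in m"
        and \<alpha>: "\<alpha> = \<gamma> + prod_monom i j" and deg: "xdeg m \<gamma> + 2 = xdeg m \<alpha>"
      by (rule xdeg_ge_2_split[OF less.prems, unfolded prod_monom_def[symmetric]])
    have ij': "1 \<le> i" "i \<le> m - 1" "1 \<le> j" "j \<le> m - 1" using ij by simp_all
    define \<alpha>' where "\<alpha>' = \<gamma> + reduct_monom i j"
    have "\<alpha>' \<in> monoms_in m" "xdeg m \<alpha>' < xdeg m \<alpha>"
      unfolding \<alpha>'_def using \<gamma> deg reduct_monom_in[OF ij'] xdeg_reduct_monom[OF ij']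
      by (simp_all add: monoms_in_add xdeg_add)
    then obtain \<beta> where \<beta>: "\<beta> \<in> monoms_in m" "xdeg m \<beta> \<le> 1" "wdeg S \<beta> = wdeg S \<alpha>'"
        "monom_poly \<alpha>' - monom_poly \<beta> \<in> ideal_gen m (apery_binomials S :: 'k mpoly set)"
      using less.hyps by blast
    have "wdeg S \<alpha>' = wdeg S \<alpha>"
      unfolding \<alpha>'_def \<alpha> by (simp add: wdeg_add wdeg_reduct_monom[OF ij'])
    have "(monom_poly \<alpha> - monom_poly \<alpha>' :: 'k mpoly) =
        monom_poly \<gamma> * (monom_poly (prod_monom i j) - monom_poly (reduct_monom i j))"
      unfolding \<alpha>'_def \<alpha> by (simp add: right_diff_distrib monom_poly_add)
    also have "\<dots> \<in> ideal_gen m (apery_binomials S)"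
      unfolding apery_binomials_eq using ij \<gamma> unfolding monom_poly_def
      by (intro ideal_gen_mult poly_ring_single ideal_gen_generator) blast+
    finally have "(monom_poly \<alpha> - monom_poly \<alpha>') + (monom_poly \<alpha>' - monom_poly \<beta>)
        \<in> ideal_gen m (apery_binomials S :: 'k mpoly set)"
      using \<beta>(4) by (rule ideal_gen_add)
    then show ?thesis
      using \<beta> \<open>wdeg S \<alpha>' = wdeg S \<alpha>\<close> by (intro bexI[of _ \<beta>]) auto
  qed
qed

lemma toric_ideal_subset_ideal_gen_apery_binomials:
  "(apery_toric_ideal S :: 'k::comm_ring_1 mpoly set) \<subseteq> ideal_gen m (apery_binomials S)"
proof
  fix p :: "'k mpoly" assume p: "p \<in> apery_toric_ideal S"
  then have keys: "Poly_Mapping.keys p \<subseteq> monoms_in m"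
    unfolding apery_toric_ideal_def by (auto dest: poly_ring_keys)
  obtain nf where nf: "\<And>\<alpha>. \<alpha> \<in> Poly_Mapping.keys p \<Longrightarrow>
      nf \<alpha> \<in> monoms_in m \<and> xdeg m (nf \<alpha>) \<le> 1 \<and> wdeg S (nf \<alpha>) = wdeg S \<alpha>
      \<and> monom_poly \<alpha> - monom_poly (nf \<alpha>) \<in> ideal_gen m (apery_binomials S :: 'k mpoly set)"
    using monom_reduces keys by (metis subsetD)
  let ?c = "Poly_Mapping.lookup p"
  define p' where "p' = (\<Sum>\<alpha>\<in>Poly_Mapping.keys p. Poly_Mapping.single (nf \<alpha>) (?c \<alpha>))"
  have "p - p' = (\<Sum>\<alpha>\<in>Poly_Mapping.keys p.
      Poly_Mapping.single 0 (?c \<alpha>) * (monom_poly \<alpha> - monom_poly (nf \<alpha>)))"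
    unfolding p'_def by (subst (1) poly_mapping_expansion[of p])
      (simp add: sum_subtractf right_diff_distrib monom_poly_def mult_single)
  also have "\<dots> \<in> ideal_gen m (apery_binomials S)"
    using nf by (intro ideal_gen_sum ideal_gen_mult poly_ring_single monoms_in_zero) auto
  finally have "p - p' \<in> ideal_gen m (apery_binomials S)" .
  moreover have "p' = 0"
  proof (rule kernel_eq_0_if_xdeg_le_1)
    show "p' \<in> poly_ring m"
      unfolding p'_def using nf by (intro poly_ring_sum poly_ring_single) auto
    have "Poly_Mapping.keys p' \<subseteq> nf ` Poly_Mapping.keys p"
      unfolding p'_def using keys_sum by (force split: if_splits)
    then show "\<forall>\<beta>\<in>Poly_Mapping.keys p'. xdeg m \<beta> \<le> 1"
      using nf by auto
    have "apery_phi S p' = apery_phi S p"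
      unfolding p'_def apery_phi_sum apery_phi_single apery_phi_wdeg[of S p] using nf by simp
    then show "apery_phi S p' = 0"
      using p unfolding apery_toric_ideal_def by simp
  qed
  ultimately show "p \<in> ideal_gen m (apery_binomials S)" by simp
qed

theorem ideal_gen_apery_binomials:
  "ideal_gen m (apery_binomials S) = (apery_toric_ideal S :: 'k::comm_ring_1 mpoly set)"
  using ideal_gen_apery_binomials_subset toric_ideal_subset_ideal_gen_apery_binomials by blast

section \<open>The initial ideal\<close>

definition xx_monomials :: "'k::comm_ring_1 mpoly set" where
  "xx_monomials = {var i * var j | i j. 1 \<le> i \<and> i \<le> m - 1 \<and> 1 \<le> j \<and> j \<le> m - 1}"

lemma xx_monomials_eq:
  "(xx_monomials :: 'k::comm_ring_1 mpoly set) = {monom_poly (prod_monom i j) | i j. 1 \<le> i \<and> i \<le> j \<and> j \<le> m - 1}"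
proof (intro set_eqI iffI)
  fix x assume "x \<in> (xx_monomials :: 'k mpoly set)"
  then obtain i j where ij: "1 \<le> i" "i \<le> m - 1" "1 \<le> j" "j \<le> m - 1" "x = var i * var j"
    unfolding xx_monomials_def by blast
  have "x = monom_poly (prod_monom (min i j) (max i j))"
    unfolding ij(5) var_mult_var prod_monom_def[symmetric] by (metis min_def max_def prod_monom_commute)
  with ij show "x \<in> {monom_poly (prod_monom i j) | i j. 1 \<le> i \<and> i \<le> j \<and> j \<le> m - 1}"
    by (intro CollectI exI[of _ "min i j"] exI[of _ "max i j"]) auto
next
  fix x assume "x \<in> {monom_poly (prod_monom i j) :: 'k mpoly | i j. 1 \<le> i \<and> i \<le> j \<and> j \<le> m - 1}"
  then show "x \<in> xx_monomials"
    unfolding xx_monomials_def var_mult_var prod_monom_def[symmetric] by fastforce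
qed

end

locale apery_term_order = num_semigroup +
  fixes le :: "monom \<Rightarrow> monom \<Rightarrow> bool"
  assumes term_order: "term_order m le"
    and xdeg_dominates:
      "\<And>\<alpha> \<beta>. \<alpha> \<in> monoms_in m \<Longrightarrow> \<beta> \<in> monoms_in m \<Longrightarrow> xdeg m \<beta> < xdeg m \<alpha> \<Longrightarrow> le \<beta> \<alpha>"
begin

lemma lead_monom_apery_binomial:
  assumes "1 \<le> i" "i \<le> m - 1" "1 \<le> j" "j \<le> m - 1"
  defines "g \<equiv> monom_poly (prod_monom i j) - monom_poly (reduct_monom i j) :: 'k::comm_ring_1 mpoly"
  shows "g \<noteq> 0" "lead_monom le g = prod_monom i j"
proof -
  have ne: "prod_monom i j \<noteq> reduct_monom i j"
    using xdeg_prod_monom[OF assms(1-4)] xdeg_reduct_monom[OF assms(1-4)] by auto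
  then have lookup: "Poly_Mapping.lookup g (prod_monom i j) = 1"
    unfolding g_def monom_poly_def by (simp add: lookup_minus lookup_single)
  then show "g \<noteq> 0" by auto
  have "Poly_Mapping.keys g \<subseteq> {prod_monom i j, reduct_monom i j}"
    unfolding g_def monom_poly_def
    by (auto simp: in_keys_iff lookup_minus lookup_single when_def split: if_splits)
  moreover have "le (reduct_monom i j) (prod_monom i j)"
    using xdeg_prod_monom[OF assms(1-4)] xdeg_reduct_monom[OF assms(1-4)]
    by (intro xdeg_dominates prod_monom_in reduct_monom_in assms(1-4)) simp
  moreover have "le (prod_monom i j) (prod_monom i j)"
    by (rule term_order_refl[OF term_order prod_monom_in[OF assms(1-4)]])
  moreover have "g \<in> poly_ring m"
    unfolding g_def monom_poly_def using prod_monom_in[OF assms(1-4)] reduct_monom_in[OF assms(1-4)]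
    by (intro poly_ring_diff poly_ring_single)
  ultimately show "lead_monom le g = prod_monom i j"
    using lookup by (intro lead_monom_eqI[OF term_order]) (auto simp: in_keys_iff)
qed

lemma xdeg_lead_monom_toric_ideal:
  assumes "(p :: 'k::comm_ring_1 mpoly) \<in> apery_toric_ideal S" "p \<noteq> 0"
  shows "xdeg m (lead_monom le p) \<ge> 2"
proof (rule ccontr)
  assume "\<not> xdeg m (lead_monom le p) \<ge> 2"
  have p: "p \<in> poly_ring m" "apery_phi S p = 0"
    using assms(1) unfolding apery_toric_ideal_def by simp_all
  note lead = lead_monom_greatest[OF term_order p(1) assms(2)]
  have "xdeg m \<beta> \<le> 1" if \<beta>: "\<beta> \<in> Poly_Mapping.keys p" for \<beta>
  proof (rule ccontr)
    assume "\<not> xdeg m \<beta> \<le> 1"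
    then have "xdeg m (lead_monom le p) < xdeg m \<beta>"
      using \<open>\<not> xdeg m (lead_monom le p) \<ge> 2\<close> by simp
    then have "le (lead_monom le p) \<beta>"
      using \<beta> lead(1) poly_ring_keys[OF p(1)] by (intro xdeg_dominates) auto
    then have "\<beta> = lead_monom le p"
      using term_order_antisym[OF term_order] lead \<beta> poly_ring_keys[OF p(1)] by blast
    then show False
      using \<open>\<not> xdeg m \<beta> \<le> 1\<close> \<open>\<not> xdeg m (lead_monom le p) \<ge> 2\<close> by simp
  qed
  then have "p = 0"
    using kernel_eq_0_if_xdeg_le_1[OF p(1) _ p(2)] by blast
  with assms(2) show False ..
qed

lemma lead_monoms_apery_binomials:
  "{monom_poly (lead_monom le g) | g. g \<in> (apery_binomials S :: 'k::comm_ring_1 mpoly set) \<and> g \<noteq> 0}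
     = (xx_monomials :: 'k mpoly set)"
proof (intro set_eqI iffI)
  fix x assume "x \<in> {monom_poly (lead_monom le g) | g. g \<in> (apery_binomials S :: 'k mpoly set) \<and> g \<noteq> 0}"
  then obtain i j where ij: "1 \<le> i" "i \<le> j" "j \<le> m - 1"
      "x = monom_poly (lead_monom le (monom_poly (prod_monom i j) - monom_poly (reduct_monom i j) :: 'k mpoly))"
    unfolding apery_binomials_eq by blast
  then have "x = monom_poly (prod_monom i j)"
    using lead_monom_apery_binomial(2)[of i j, where 'k='k] by simp
  then show "x \<in> xx_monomials"
    unfolding xx_monomials_eq using ij by blast
next
  fix x assume "x \<in> (xx_monomials :: 'k mpoly set)"
  then obtain i j where ij: "1 \<le> i" "i \<le> j" "j \<le> m - 1" "x = monom_poly (prod_monom i j)"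
    unfolding xx_monomials_eq by blast
  let ?g = "monom_poly (prod_monom i j) - monom_poly (reduct_monom i j) :: 'k mpoly"
  have "?g \<in> apery_binomials S"
    unfolding apery_binomials_eq using ij by blast
  moreover have "?g \<noteq> 0" "x = monom_poly (lead_monom le ?g)"
    using lead_monom_apery_binomial[of i j, where 'k='k] ij by auto
  ultimately show "x \<in> {monom_poly (lead_monom le g) | g. g \<in> (apery_binomials S :: 'k mpoly set) \<and> g \<noteq> 0}"
    by blast
qed

lemma initial_ideal_toric_ideal:
  "initial_ideal m le (apery_toric_ideal S :: 'k::comm_ring_1 mpoly set) = ideal_gen m xx_monomials"
proof
  have "(xx_monomials :: 'k mpoly set) \<subseteq>
      {monom_poly (lead_monom le p) | p. p \<in> (apery_toric_ideal S :: 'k mpoly set) \<and> p \<noteq> 0}"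
    using lead_monoms_apery_binomials[where 'k='k] apery_binomials_subset_toric_ideal[where 'k='k]
    by blast
  then show "ideal_gen m xx_monomials \<subseteq> initial_ideal m le (apery_toric_ideal S :: 'k mpoly set)"
    unfolding initial_ideal_def by (rule ideal_gen_mono)
next
  have "monom_poly (lead_monom le p) \<in> ideal_gen m (xx_monomials :: 'k mpoly set)"
    if "p \<in> apery_toric_ideal S" "p \<noteq> 0" for p :: "'k mpoly"
  proof -
    have "lead_monom le p \<in> monoms_in m"
      using lead_monom_greatest(1)[OF term_order _ that(2)] that(1)
      unfolding apery_toric_ideal_def by (auto dest: poly_ring_keys)
    moreover have "xdeg m (lead_monom le p) \<ge> 2"
      using xdeg_lead_monom_toric_ideal that by blast
    ultimately obtain i j \<gamma> where ij: "1 \<le> i" "i \<le> j" "j \<le> m - 1" "\<gamma> \<in> monoms_in m"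
        "lead_monom le p = \<gamma> + prod_monom i j"
      by (rule xdeg_ge_2_split[unfolded prod_monom_def[symmetric]])
    then have "monom_poly (lead_monom le p) = monom_poly \<gamma> * (monom_poly (prod_monom i j) :: 'k mpoly)"
      by (simp add: monom_poly_add)
    also have "\<dots> \<in> ideal_gen m xx_monomials"
      unfolding xx_monomials_eq using ij unfolding monom_poly_def
      by (intro ideal_gen_mult poly_ring_single ideal_gen_generator) blast+
    finally show ?thesis .
  qed
  then show "initial_ideal m le (apery_toric_ideal S :: 'k mpoly set) \<subseteq> ideal_gen m xx_monomials"
    unfolding initial_ideal_def by (intro ideal_gen_minimal) blast
qed

theorem groebner_basis_apery_binomials:
  "groebner_basis m le (apery_binomials S) (apery_toric_ideal S :: 'k::comm_ring_1 mpoly set)"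
  unfolding groebner_basis_def lead_monoms_apery_binomials initial_ideal_toric_ideal
  using apery_binomials_subset_toric_ideal by blast

end

theorem lemma3p1:
  fixes S :: "nat set" and le :: "monom \<Rightarrow> monom \<Rightarrow> bool"
  assumes "numerical_semigroup S"
    and "multiplicity S \<ge> 2"
    and "term_order (multiplicity S) le"
    and "\<forall>\<alpha>\<in>monoms_in (multiplicity S). \<forall>\<beta>\<in>monoms_in (multiplicity S).
           (\<Sum>i\<in>{1..multiplicity S - 1}. Poly_Mapping.lookup \<alpha> i) > (\<Sum>i\<in>{1..multiplicity S - 1}. Poly_Mapping.lookup \<beta> i)
           \<longrightarrow> le \<beta> \<alpha> \<and> \<alpha> \<noteq> \<beta>"
  shows "ideal_gen (multiplicity S) (apery_binomials S) = (apery_toric_ideal S :: 'k::field mpoly set)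
       \<and> groebner_basis (multiplicity S) le (apery_binomials S) (apery_toric_ideal S :: 'k mpoly set)
       \<and> initial_ideal (multiplicity S) le (apery_toric_ideal S :: 'k mpoly set)
           = ideal_gen (multiplicity S) {var i * var j | i j. 1 \<le> i \<and> i \<le> multiplicity S - 1
                                                          \<and> 1 \<le> j \<and> j \<le> multiplicity S - 1}"
proof -
  interpret apery_term_order S le
    using assms(1,3,4) by unfold_locales (auto simp: xdeg_def)
  show ?thesis
    using ideal_gen_apery_binomials groebner_basis_apery_binomials initial_ideal_toric_ideal
    unfolding xx_monomials_def by blast
qed

end
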